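(* Let $k\geq2$. Then $$F_k(x,p)=\sum_{j=0}^{k-2}J_j(p)x^j+\frac{x^{k-1}}{1-(k-1)x^2}\bigl((k-1)J_{k-2}(p)x+J_{k-1}(p)\bigr).$$ Moreover, for all $n\geq0$, the number of involutions of length $k+2n$ that avoid all patterns in $\mathcal{F}_k$ is $(k-1)^{n+1}I_{k-2}$, and the number of involutions of length $k+2n-1$ that avoid all patterns in $\mathcal{F}_k$ is $(k-1)^nI_{k-1}$.
   Context: $\mathcal{F}_k=\{\sigma\in\mathfrak{S}_k:\sigma_1=1\}$. An involution is a permutation $\pi$ with $\pi_{\pi_i}=i$ for all $i$; $\mathcal{I}_n(T)$ is the set of involutions of $[n]$ avoiding (in the classical pattern sense) every pattern in $T$; $\mathcal{I}_0$ contains only the empty permutation. $I_n$ is the number of involutions of $[n]$. $J_n(p)=\sum_{\pi\in\mathcal{I}_n}p^{\mathrm{fix}(\pi)}$, where $\mathrm{fix}(\pi)$ is the number of fixed points; $J_0=1,J_1=p$, $J_n=pJ_{n-1}+(n-1)J_{n-2}$. $F_k(x,p)=\sum_{n\ge0}\sum_{\pi\in\mathcal{I}_n(\mathcal{F}_k)}p^{\mathrm{fix}(\pi)}x^n$. *)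

theory Defs
  imports "HOL-Combinatorics.Permutations" "HOL-Computational_Algebra.Formal_Power_Series"
begin

text \<open>Permutations of [n] are functions that permute {1..n} (identity outside).\<close>

definition is_involution :: "nat \<Rightarrow> (nat \<Rightarrow> nat) \<Rightarrow> bool" where
  "is_involution n \<pi> \<longleftrightarrow> \<pi> permutes {1..n} \<and> (\<forall>i\<in>{1..n}. \<pi> (\<pi> i) = i)"

definition involutions :: "nat \<Rightarrow> (nat \<Rightarrow> nat) set" where
  "involutions n = {\<pi>. is_involution n \<pi>}"

definition contains_pattern :: "nat \<Rightarrow> (nat \<Rightarrow> nat) \<Rightarrow> nat \<Rightarrow> (nat \<Rightarrow> nat) \<Rightarrow> bool" where
  "contains_pattern n \<pi> m \<sigma> \<longleftrightarrow>
     (\<exists>f. strict_mono_on {1..m} f \<and> f ` {1..m} \<subseteq> {1..n} \<and>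
          (\<forall>a\<in>{1..m}. \<forall>b\<in>{1..m}. \<pi> (f a) < \<pi> (f b) \<longleftrightarrow> \<sigma> a < \<sigma> b))"

definition Fpat :: "nat \<Rightarrow> (nat \<Rightarrow> nat) set" where
  "Fpat k = {\<sigma>. \<sigma> permutes {1..k} \<and> \<sigma> 1 = 1}"

definition inv_avoid :: "nat \<Rightarrow> nat \<Rightarrow> (nat \<Rightarrow> nat) set \<Rightarrow> (nat \<Rightarrow> nat) set" where
  "inv_avoid n m T = {\<pi>. is_involution n \<pi> \<and> (\<forall>\<sigma>\<in>T. \<not> contains_pattern n \<pi> m \<sigma>)}"

definition fixpts :: "nat \<Rightarrow> (nat \<Rightarrow> nat) \<Rightarrow> nat" where
  "fixpts n \<pi> = card {i\<in>{1..n}. \<pi> i = i}"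

fun J :: "nat \<Rightarrow> real \<Rightarrow> real" where
  "J 0 p = 1"
| "J (Suc 0) p = p"
| "J (Suc (Suc n)) p = p * J (Suc n) p + real (Suc n) * J n p"

definition Fgf :: "nat \<Rightarrow> real \<Rightarrow> real fps" where
  "Fgf k p = Abs_fps (\<lambda>n. \<Sum>\<pi>\<in>inv_avoid n k (Fpat k). p ^ fixpts n \<pi>)"

end

theory Submission
  imports Defs
begin

text \<open>
  Classify an involution \<pi> of [N] by its first value m = \<pi> 1. If m + k - 1 \<le> N, the k consecutive
  entries starting at position m begin with the minimum value 1, so they form a pattern of F_k.
  Otherwise m is among the last k - 1 positions, and deleting the 2-cycle (1 m) is a bijection onto
  the involutions of [N - 2] that preserves fixed points and, in both directions, F_k-avoidance:
  an occurrence of a pattern starting with its minimum cannot use position 1 or m, since then its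
  other k - 1 entries would need k - 1 positions or values above m.
  Hence the fixed-point enumerators S_N of the avoiders satisfy S_N = (k - 1) S_(N-2) for N \<ge> k,
  while S_N = J_N for N < k, where no pattern of length k fits and the same decomposition (now
  including a fixed point at 1) yields the recurrence of J_N. The generating function and the
  counts (the case p = 1) follow.
\<close>

lemma is_involution_iff:
  "is_involution n \<pi> \<longleftrightarrow>
     (\<forall>x. x \<notin> {1..n} \<longrightarrow> \<pi> x = x) \<and> (\<forall>x\<in>{1..n}. \<pi> x \<in> {1..n} \<and> \<pi> (\<pi> x) = x)"
proof
  assume "is_involution n \<pi>"
  then show "(\<forall>x. x \<notin> {1..n} \<longrightarrow> \<pi> x = x) \<and> (\<forall>x\<in>{1..n}. \<pi> x \<in> {1..n} \<and> \<pi> (\<pi> x) = x)"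
    unfolding is_involution_def by (metis permutes_not_in permutes_in_image)
next
  assume inv: "(\<forall>x. x \<notin> {1..n} \<longrightarrow> \<pi> x = x) \<and> (\<forall>x\<in>{1..n}. \<pi> x \<in> {1..n} \<and> \<pi> (\<pi> x) = x)"
  then have "inj_on \<pi> {1..n}" by (metis inj_onI)
  with inv have "\<pi> permutes {1..n}" by (intro inj_imp_permutes) auto
  with inv show "is_involution n \<pi>" by (simp add: is_involution_def)
qed

lemma involution_involutive: "is_involution n \<pi> \<Longrightarrow> \<pi> (\<pi> x) = x"
  by (metis is_involution_iff)

lemma involution_in_range: "is_involution n \<pi> \<Longrightarrow> x \<in> {1..n} \<Longrightarrow> \<pi> x \<in> {1..n}"
  by (metis is_involution_iff)

lemma involution_inj: "is_involution n \<pi> \<Longrightarrow> inj \<pi>"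
  by (metis injI involution_involutive)

lemma finite_involutions: "finite (involutions n)"
proof (rule finite_subset)
  show "involutions n \<subseteq> {\<pi>. \<pi> permutes {1..n}}"
    by (auto simp: involutions_def is_involution_def)
qed (rule finite_permutations, simp)

lemma involutions_le_1: "n \<le> 1 \<Longrightarrow> involutions n = {id}"
  unfolding involutions_def is_involution_iff
  by (auto intro!: ext) (metis atLeastAtMost_iff le_antisym order_trans)

lemma fixpts_id: "fixpts n id = n"
  unfolding fixpts_def id_apply simp_thms Collect_mem_eq by simp

definition fix_enum :: "nat \<Rightarrow> real \<Rightarrow> (nat \<Rightarrow> nat) set \<Rightarrow> real" where
  "fix_enum n p A = (\<Sum>\<pi>\<in>A. p ^ fixpts n \<pi>)"

lemma fix_enum_bij_betw:
  assumes "bij_betw h A B" and "\<And>\<sigma>. \<sigma> \<in> A \<Longrightarrow> fixpts N (h \<sigma>) = fixpts n \<sigma> + d"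
  shows "fix_enum N p B = p ^ d * fix_enum n p A"
  unfolding fix_enum_def sum_distrib_left
  by (simp add: sum.reindex_bij_betw[OF assms(1), symmetric] assms(2) power_add mult.commute)

lemma fix_enum_group_by_first:
  assumes "A \<subseteq> involutions N" and "N \<ge> 1"
  shows "fix_enum N p A = (\<Sum>m\<in>{1..N}. fix_enum N p {\<pi>\<in>A. \<pi> 1 = m})"
proof -
  have "finite A" using assms finite_involutions finite_subset by blast
  moreover have "(\<lambda>\<pi>. \<pi> 1) ` A \<subseteq> {1..N}"
  proof
    fix m assume "m \<in> (\<lambda>\<pi>. \<pi> 1) ` A"
    then obtain \<pi> where "\<pi> \<in> A" "m = \<pi> 1" by blast
    moreover have "is_involution N \<pi>" using assms \<open>\<pi> \<in> A\<close> by (auto simp: involutions_def)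
    ultimately show "m \<in> {1..N}" using involution_in_range[of N \<pi> 1] assms(2) by simp
  qed
  ultimately show ?thesis
    unfolding fix_enum_def by (simp add: sum.group)
qed

definition ins_fixpt :: "nat \<Rightarrow> (nat \<Rightarrow> nat) \<Rightarrow> nat \<Rightarrow> nat" where
  "ins_fixpt n \<sigma> j = (if j = 1 then 1 else if j \<in> {2..n+1} then \<sigma> (j - 1) + 1 else j)"

definition del_fixpt :: "nat \<Rightarrow> (nat \<Rightarrow> nat) \<Rightarrow> nat \<Rightarrow> nat" where
  "del_fixpt n \<pi> i = (if i \<in> {1..n} then \<pi> (i + 1) - 1 else i)"

lemma ins_fixpt_involution:
  assumes "is_involution n \<sigma>"
  shows "is_involution (n+1) (ins_fixpt n \<sigma>)"
  unfolding is_involution_iff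
proof
  show "\<forall>x. x \<notin> {1..n+1} \<longrightarrow> ins_fixpt n \<sigma> x = x" by (auto simp: ins_fixpt_def)
  show "\<forall>x\<in>{1..n+1}. ins_fixpt n \<sigma> x \<in> {1..n+1} \<and> ins_fixpt n \<sigma> (ins_fixpt n \<sigma> x) = x"
  proof
    fix x assume x: "x \<in> {1..n+1}"
    show "ins_fixpt n \<sigma> x \<in> {1..n+1} \<and> ins_fixpt n \<sigma> (ins_fixpt n \<sigma> x) = x"
    proof (cases "x = 1")
      case False
      with x have "x - 1 \<in> {1..n}" by auto
      with assms x False show ?thesis
        by (auto simp: ins_fixpt_def involution_involutive dest: involution_in_range)
    qed (simp add: ins_fixpt_def)
  qed
qed

lemma del_fixpt_involution:
  assumes \<pi>: "is_involution (n+1) \<pi>" and "\<pi> 1 = 1"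
  shows "is_involution n (del_fixpt n \<pi>)" and "ins_fixpt n (del_fixpt n \<pi>) = \<pi>"
proof -
  have \<pi>_upper: "\<pi> j \<in> {2..n+1}" if "j \<in> {2..n+1}" for j
  proof -
    have "\<pi> j \<noteq> 1" using that \<open>\<pi> 1 = 1\<close> involution_involutive[OF \<pi>, of j] by auto
    with involution_in_range[OF \<pi>, of j] that show ?thesis by auto
  qed
  show "is_involution n (del_fixpt n \<pi>)"
    unfolding is_involution_iff
  proof
    show "\<forall>x. x \<notin> {1..n} \<longrightarrow> del_fixpt n \<pi> x = x" by (simp add: del_fixpt_def)
    show "\<forall>x\<in>{1..n}. del_fixpt n \<pi> x \<in> {1..n} \<and> del_fixpt n \<pi> (del_fixpt n \<pi> x) = x"
    proof
      fix x assume x: "x \<in> {1..n}"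
      then have y: "\<pi> (x + 1) \<in> {2..n+1}" by (intro \<pi>_upper) auto
      then have "\<pi> (x + 1) - 1 \<in> {1..n}" and "\<pi> (x + 1) - 1 + 1 = \<pi> (x + 1)" by auto
      then have "del_fixpt n \<pi> (\<pi> (x + 1) - 1) = x"
        by (simp add: del_fixpt_def involution_involutive[OF \<pi>])
      with x y
      show "del_fixpt n \<pi> x \<in> {1..n} \<and> del_fixpt n \<pi> (del_fixpt n \<pi> x) = x"
        by (auto simp: del_fixpt_def)
    qed
  qed
  show "ins_fixpt n (del_fixpt n \<pi>) = \<pi>"
  proof
    fix j
    show "ins_fixpt n (del_fixpt n \<pi>) j = \<pi> j"
      using \<pi>_upper[of j] \<open>\<pi> 1 = 1\<close> \<pi>[unfolded is_involution_iff]
      by (auto simp: ins_fixpt_def del_fixpt_def)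
  qed
qed

lemma del_ins_fixpt: "is_involution n \<sigma> \<Longrightarrow> del_fixpt n (ins_fixpt n \<sigma>) = \<sigma>"
  by (rule ext) (auto simp: is_involution_iff del_fixpt_def ins_fixpt_def)

lemma bij_betw_ins_fixpt:
  "bij_betw (ins_fixpt n) (involutions n) {\<pi>\<in>involutions (n+1). \<pi> 1 = 1}"
proof (rule bij_betw_byWitness[where f' = "del_fixpt n"])
  show "\<forall>\<sigma>\<in>involutions n. del_fixpt n (ins_fixpt n \<sigma>) = \<sigma>"
    by (simp add: involutions_def del_ins_fixpt)
  show "\<forall>\<pi>\<in>{\<pi>\<in>involutions (n+1). \<pi> 1 = 1}. ins_fixpt n (del_fixpt n \<pi>) = \<pi>"
    by (simp add: involutions_def del_fixpt_involution)
  show "ins_fixpt n ` involutions n \<subseteq> {\<pi>\<in>involutions (n+1). \<pi> 1 = 1}"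
    using ins_fixpt_involution by (auto simp: involutions_def ins_fixpt_def)
  show "del_fixpt n ` {\<pi>\<in>involutions (n+1). \<pi> 1 = 1} \<subseteq> involutions n"
    by (auto simp: involutions_def del_fixpt_involution)
qed

lemma fixpts_ins_fixpt:
  assumes "is_involution n \<sigma>"
  shows "fixpts (n+1) (ins_fixpt n \<sigma>) = fixpts n \<sigma> + 1"
proof -
  have "{i\<in>{1..n+1}. ins_fixpt n \<sigma> i = i} = insert 1 (Suc ` {i\<in>{1..n}. \<sigma> i = i})"
  proof (intro equalityI subsetI)
    fix j assume j: "j \<in> {i\<in>{1..n+1}. ins_fixpt n \<sigma> i = i}"
    show "j \<in> insert 1 (Suc ` {i\<in>{1..n}. \<sigma> i = i})"
    proof (cases "j = 1")
      case False
      with j have "j - 1 \<in> {i\<in>{1..n}. \<sigma> i = i}" and "j = Suc (j - 1)"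
        by (auto simp: ins_fixpt_def)
      then show ?thesis by blast
    qed simp
  qed (auto simp: ins_fixpt_def)
  moreover have "1 \<notin> Suc ` {i\<in>{1..n}. \<sigma> i = i}" by auto
  ultimately show ?thesis by (simp add: fixpts_def card_image)
qed

text \<open>\<open>skip m\<close> enumerates {2, 3, ...} - {m} increasingly; \<open>unskip m\<close> inverts it there.\<close>

definition skip :: "nat \<Rightarrow> nat \<Rightarrow> nat" where
  "skip m i = (if i + 1 < m then i + 1 else i + 2)"

definition unskip :: "nat \<Rightarrow> nat \<Rightarrow> nat" where
  "unskip m j = (if j < m then j - 1 else j - 2)"

lemma skip_less_iff [simp]: "skip m i < skip m j \<longleftrightarrow> i < j"
  by (auto simp: skip_def)

lemma skip_eq_iff [simp]: "skip m i = skip m j \<longleftrightarrow> i = j"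
  by (auto simp: skip_def)

lemma unskip_skip [simp]: "unskip m (skip m i) = i"
  by (auto simp: skip_def unskip_def)

lemma skip_unskip: "2 \<le> j \<Longrightarrow> j \<noteq> m \<Longrightarrow> skip m (unskip m j) = j"
  by (auto simp: skip_def unskip_def)

lemma unskip_less_iff:
  "2 \<le> i \<Longrightarrow> i \<noteq> m \<Longrightarrow> 2 \<le> j \<Longrightarrow> j \<noteq> m \<Longrightarrow> unskip m i < unskip m j \<longleftrightarrow> i < j"
  by (metis skip_less_iff skip_unskip)

lemma skip_in_range:
  "i \<in> {1..n} \<Longrightarrow> 2 \<le> m \<Longrightarrow> skip m i \<in> {2..n+2} \<and> skip m i \<noteq> m"
  by (auto simp: skip_def)

lemma unskip_in_range:
  "j \<in> {2..n+2} \<Longrightarrow> j \<noteq> m \<Longrightarrow> 2 \<le> m \<Longrightarrow> m \<le> n + 2 \<Longrightarrow> unskip m j \<in> {1..n}"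
  by (auto simp: unskip_def)

definition ins_cycle :: "nat \<Rightarrow> nat \<Rightarrow> (nat \<Rightarrow> nat) \<Rightarrow> nat \<Rightarrow> nat" where
  "ins_cycle n m \<sigma> j =
     (if j = 1 then m else if j = m then 1
      else if j \<in> {2..n+2} then skip m (\<sigma> (unskip m j)) else j)"

definition del_cycle :: "nat \<Rightarrow> nat \<Rightarrow> (nat \<Rightarrow> nat) \<Rightarrow> nat \<Rightarrow> nat" where
  "del_cycle n m \<pi> i = (if i \<in> {1..n} then unskip m (\<pi> (skip m i)) else i)"

lemma ins_cycle_skip:
  assumes "i \<in> {1..n}" and "2 \<le> m"
  shows "ins_cycle n m \<sigma> (skip m i) = skip m (\<sigma> i)"
  using skip_in_range[OF assms] by (auto simp: ins_cycle_def)

lemma ins_cycle_involution: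
  assumes \<sigma>: "is_involution n \<sigma>" and m: "2 \<le> m" "m \<le> n+2"
  shows "is_involution (n+2) (ins_cycle n m \<sigma>)"
  unfolding is_involution_iff
proof
  show "\<forall>x. x \<notin> {1..n+2} \<longrightarrow> ins_cycle n m \<sigma> x = x"
    using m by (auto simp: ins_cycle_def)
  show "\<forall>x\<in>{1..n+2}. ins_cycle n m \<sigma> x \<in> {1..n+2} \<and> ins_cycle n m \<sigma> (ins_cycle n m \<sigma> x) = x"
  proof
    fix x assume x: "x \<in> {1..n+2}"
    show "ins_cycle n m \<sigma> x \<in> {1..n+2} \<and> ins_cycle n m \<sigma> (ins_cycle n m \<sigma> x) = x"
    proof (cases "x = 1 \<or> x = m")
      case True
      with m show ?thesis by (auto simp: ins_cycle_def)
    next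
      case False
      with x have x': "x \<in> {2..n+2}" "x \<noteq> m" by auto
      define y where "y = unskip m x"
      have y: "y \<in> {1..n}" unfolding y_def by (rule unskip_in_range[OF x' m])
      have x_eq: "x = skip m y" using x' by (simp add: y_def skip_unskip)
      have \<sigma>y: "\<sigma> y \<in> {1..n}" by (rule involution_in_range[OF \<sigma> y])
      have "ins_cycle n m \<sigma> x = skip m (\<sigma> y)"
        unfolding x_eq by (rule ins_cycle_skip[OF y m(1)])
      moreover have "ins_cycle n m \<sigma> (skip m (\<sigma> y)) = x"
        unfolding x_eq ins_cycle_skip[OF \<sigma>y m(1)] involution_involutive[OF \<sigma>] ..
      moreover have "skip m (\<sigma> y) \<in> {1..n+2}" using skip_in_range[OF \<sigma>y m(1)] by auto
      ultimately show ?thesis by simp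
    qed
  qed
qed

lemma del_cycle_involution:
  assumes \<pi>: "is_involution (n+2) \<pi>" and "\<pi> 1 = m" and m: "2 \<le> m" "m \<le> n+2"
  shows "is_involution n (del_cycle n m \<pi>)" and "ins_cycle n m (del_cycle n m \<pi>) = \<pi>"
proof -
  have "\<pi> m = 1" using \<open>\<pi> 1 = m\<close> involution_involutive[OF \<pi>] by metis
  have \<pi>_middle: "\<pi> j \<in> {2..n+2} \<and> \<pi> j \<noteq> m" if j: "j \<in> {2..n+2}" "j \<noteq> m" for j
  proof -
    have "\<pi> j \<in> {1..n+2}" using j by (intro involution_in_range[OF \<pi>]) auto
    moreover have "\<pi> j \<noteq> 1" "\<pi> j \<noteq> m"
      using j \<open>\<pi> 1 = m\<close> \<open>\<pi> m = 1\<close> involution_involutive[OF \<pi>, of j] by auto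
    ultimately show ?thesis by auto
  qed
  show "is_involution n (del_cycle n m \<pi>)"
    unfolding is_involution_iff
  proof
    show "\<forall>x. x \<notin> {1..n} \<longrightarrow> del_cycle n m \<pi> x = x" by (simp add: del_cycle_def)
    show "\<forall>x\<in>{1..n}. del_cycle n m \<pi> x \<in> {1..n} \<and> del_cycle n m \<pi> (del_cycle n m \<pi> x) = x"
    proof
      fix x assume x: "x \<in> {1..n}"
      then have y: "\<pi> (skip m x) \<in> {2..n+2} \<and> \<pi> (skip m x) \<noteq> m"
        using skip_in_range m \<pi>_middle by blast
      then have u: "unskip m (\<pi> (skip m x)) \<in> {1..n}"
        using unskip_in_range m by blast
      have "del_cycle n m \<pi> (unskip m (\<pi> (skip m x))) = x"
        using u y by (simp add: del_cycle_def skip_unskip involution_involutive[OF \<pi>])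
      with x u show "del_cycle n m \<pi> x \<in> {1..n} \<and> del_cycle n m \<pi> (del_cycle n m \<pi> x) = x"
        by (simp add: del_cycle_def)
    qed
  qed
  show "ins_cycle n m (del_cycle n m \<pi>) = \<pi>"
  proof
    fix j
    consider "j = 1" | "j = m" | "j \<in> {2..n+2}" "j \<noteq> m" | "j \<notin> {1..n+2}"
      by force
    then show "ins_cycle n m (del_cycle n m \<pi>) j = \<pi> j"
    proof cases
      case 3
      have "unskip m j \<in> {1..n}" by (rule unskip_in_range[OF 3 m])
      then have "del_cycle n m \<pi> (unskip m j) = unskip m (\<pi> j)"
        using 3 by (simp add: del_cycle_def skip_unskip)
      with 3 \<pi>_middle[OF 3] show ?thesis by (simp add: ins_cycle_def skip_unskip)
    next
      case 4
      then have "j \<noteq> 1" "j \<noteq> m" "j \<notin> {2..n+2}" using m by auto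
      then have "ins_cycle n m (del_cycle n m \<pi>) j = j" by (auto simp: ins_cycle_def)
      with 4 \<pi> show ?thesis by (simp add: is_involution_iff)
    qed (use m \<open>\<pi> 1 = m\<close> \<open>\<pi> m = 1\<close> in \<open>simp_all add: ins_cycle_def\<close>)
  qed
qed

lemma del_ins_cycle: "is_involution n \<sigma> \<Longrightarrow> 2 \<le> m \<Longrightarrow> del_cycle n m (ins_cycle n m \<sigma>) = \<sigma>"
  by (rule ext) (auto simp: del_cycle_def ins_cycle_skip is_involution_iff)

lemma bij_betw_ins_cycle:
  assumes "2 \<le> m" "m \<le> n+2"
  shows "bij_betw (ins_cycle n m) (involutions n) {\<pi>\<in>involutions (n+2). \<pi> 1 = m}"
proof (rule bij_betw_byWitness[where f' = "del_cycle n m"])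
  show "\<forall>\<sigma>\<in>involutions n. del_cycle n m (ins_cycle n m \<sigma>) = \<sigma>"
    using assms by (simp add: involutions_def del_ins_cycle)
  show "\<forall>\<pi>\<in>{\<pi>\<in>involutions (n+2). \<pi> 1 = m}. ins_cycle n m (del_cycle n m \<pi>) = \<pi>"
    using assms by (simp add: involutions_def del_cycle_involution)
  show "ins_cycle n m ` involutions n \<subseteq> {\<pi>\<in>involutions (n+2). \<pi> 1 = m}"
    using assms ins_cycle_involution by (auto simp: involutions_def ins_cycle_def)
  show "del_cycle n m ` {\<pi>\<in>involutions (n+2). \<pi> 1 = m} \<subseteq> involutions n"
    using assms by (auto simp: involutions_def del_cycle_involution)
qed

lemma fixpts_ins_cycle:
  assumes m: "2 \<le> m" "m \<le> n+2"
  shows "fixpts (n+2) (ins_cycle n m \<sigma>) = fixpts n \<sigma>"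
proof -
  have "{j\<in>{1..n+2}. ins_cycle n m \<sigma> j = j} = skip m ` {i\<in>{1..n}. \<sigma> i = i}"
  proof (intro equalityI subsetI)
    fix j assume j: "j \<in> {j\<in>{1..n+2}. ins_cycle n m \<sigma> j = j}"
    then have j': "j \<in> {2..n+2}" "j \<noteq> m" using m by (auto simp: ins_cycle_def split: if_splits)
    define i where "i = unskip m j"
    have i: "i \<in> {1..n}" unfolding i_def by (rule unskip_in_range[OF j' m])
    have j_eq: "j = skip m i" using j' by (simp add: i_def skip_unskip)
    with j have "\<sigma> i = i" by (simp add: ins_cycle_skip[OF i m(1)])
    with i j_eq show "j \<in> skip m ` {i\<in>{1..n}. \<sigma> i = i}" by blast
  next
    fix j assume "j \<in> skip m ` {i\<in>{1..n}. \<sigma> i = i}"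
    then obtain i where i: "i \<in> {1..n}" "\<sigma> i = i" and "j = skip m i" by blast
    with skip_in_range[OF i(1) m(1)] ins_cycle_skip[OF i(1) m(1)]
    show "j \<in> {j\<in>{1..n+2}. ins_cycle n m \<sigma> j = j}" by auto
  qed
  moreover have "inj (skip m)" by (simp add: inj_def)
  ultimately show ?thesis by (simp add: fixpts_def card_image inj_on_subset)
qed

lemma fix_enum_involutions_rec:
  "fix_enum (n+2) p (involutions (n+2)) =
     p * fix_enum (n+1) p (involutions (n+1)) + real (n+1) * fix_enum n p (involutions n)"
proof -
  let ?E = "\<lambda>m. fix_enum (n+2) p {\<pi>\<in>involutions (n+2). \<pi> 1 = m}"
  have "fix_enum (n+1+1) p {\<pi>\<in>involutions (n+1+1). \<pi> 1 = 1} =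
          p ^ 1 * fix_enum (n+1) p (involutions (n+1))"
    by (rule fix_enum_bij_betw[OF bij_betw_ins_fixpt], rule fixpts_ins_fixpt)
      (simp add: involutions_def)
  then have first_fixed: "?E 1 = p * fix_enum (n+1) p (involutions (n+1))"
    by (simp add: add.assoc)
  have first_moved: "?E m = p ^ 0 * fix_enum n p (involutions n)" if "m \<in> {2..n+2}" for m
    by (rule fix_enum_bij_betw[OF bij_betw_ins_cycle]) (use that fixpts_ins_cycle[of m n] in auto)
  have "fix_enum (n+2) p (involutions (n+2)) = (\<Sum>m\<in>{1..n+2}. ?E m)"
    by (rule fix_enum_group_by_first) simp_all
  also have "\<dots> = ?E 1 + (\<Sum>m\<in>{2..n+2}. ?E m)"
    using sum.atLeast_Suc_atMost[of 1 "n+2" ?E] unfolding Suc_1 by simp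
  also have "\<dots> = ?E 1 + (\<Sum>m\<in>{2..n+2}. fix_enum n p (involutions n))"
    using first_moved by (intro arg_cong[where f = "(+) (?E 1)"] sum.cong) auto
  also have "\<dots> = p * fix_enum (n+1) p (involutions (n+1)) + real (n+1) * fix_enum n p (involutions n)"
    using first_fixed by simp
  finally show ?thesis .
qed

lemma fix_enum_involutions: "fix_enum n p (involutions n) = J n p"
proof (induction n p rule: J.induct)
  case (3 n p)
  then show ?case using fix_enum_involutions_rec[of n p] by (simp add: add.commute)
qed (simp_all add: fix_enum_def involutions_le_1 fixpts_id)

lemma not_contains_longer_pattern: "n < m \<Longrightarrow> \<not> contains_pattern n \<pi> m \<sigma>"
proof
  assume "contains_pattern n \<pi> m \<sigma>" and "n < m"
  then obtain f where "strict_mono_on {1..m} f" "f ` {1..m} \<subseteq> {1..n}"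
    unfolding contains_pattern_def by blast
  then have "card {1..m} \<le> card {1..n}"
    by (intro card_inj_on_le strict_mono_on_imp_inj_on) auto
  with \<open>n < m\<close> show False by simp
qed

lemma order_isomorphic_permutation:
  fixes v :: "nat \<Rightarrow> 'a::linorder"
  assumes inj: "inj_on v {1..k}"
  obtains r where "r permutes {1..k}" and "\<forall>a\<in>{1..k}. \<forall>b\<in>{1..k}. v a < v b \<longleftrightarrow> r a < r b"
proof -
  define r where "r a = (if a \<in> {1..k} then card {b\<in>{1..k}. v b \<le> v a} else a)" for a
  have r_less: "r a < r b" if "a \<in> {1..k}" "b \<in> {1..k}" "v a < v b" for a b
  proof -
    have "{c\<in>{1..k}. v c \<le> v a} \<subseteq> {c\<in>{1..k}. v c \<le> v b}"
      and "b \<notin> {c\<in>{1..k}. v c \<le> v a}" "b \<in> {c\<in>{1..k}. v c \<le> v b}"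
      using that by auto
    then have "{c\<in>{1..k}. v c \<le> v a} \<subset> {c\<in>{1..k}. v c \<le> v b}" by blast
    with that show ?thesis by (simp add: r_def psubset_card_mono)
  qed
  have r_neq: "r a \<noteq> r b" if "a \<in> {1..k}" "b \<in> {1..k}" "a \<noteq> b" for a b
  proof -
    have "v a \<noteq> v b" using that inj by (auto dest: inj_onD)
    then show ?thesis using r_less[OF that(1,2)] r_less[OF that(2,1)] by fastforce
  qed
  have r_iff: "\<forall>a\<in>{1..k}. \<forall>b\<in>{1..k}. v a < v b \<longleftrightarrow> r a < r b"
  proof (intro ballI iffI)
    fix a b assume ab: "a \<in> {1..k}" "b \<in> {1..k}" "r a < r b"
    show "v a < v b"
    proof (rule ccontr)
      assume "\<not> v a < v b"
      then consider "v b < v a" | "v a = v b" using not_less_iff_gr_or_eq by blast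
      then show False
      proof cases
        case 1
        with r_less[OF ab(2,1)] ab(3) show False by simp
      next
        case 2
        with inj ab have "a = b" by (auto dest: inj_onD)
        with ab(3) show False by simp
      qed
    qed
  qed (rule r_less)
  have "r permutes {1..k}"
  proof (rule inj_imp_permutes)
    show "inj_on r {1..k}" unfolding inj_on_def using r_neq by blast
    show "r a \<in> {1..k}" if "a \<in> {1..k}" for a
    proof -
      have "a \<in> {c\<in>{1..k}. v c \<le> v a}" using that by simp
      then have "0 < card {c\<in>{1..k}. v c \<le> v a}" by (auto simp: card_gt_0_iff)
      moreover have "card {c\<in>{1..k}. v c \<le> v a} \<le> card {1..k}"
        by (rule card_mono) auto
      ultimately show ?thesis using that by (simp add: r_def)
    qed
  qed (auto simp: r_def)
  with r_iff show ?thesis using that by blast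
qed

lemma Fpat_iff_first_least:
  assumes \<sigma>: "\<sigma> permutes {1..k}" and "1 \<le> k"
  shows "\<sigma> \<in> Fpat k \<longleftrightarrow> (\<forall>b\<in>{2..k}. \<sigma> 1 < \<sigma> b)"
proof
  assume "\<sigma> \<in> Fpat k"
  then have "\<sigma> 1 = 1" by (simp add: Fpat_def)
  show "\<forall>b\<in>{2..k}. \<sigma> 1 < \<sigma> b"
  proof
    fix b assume b: "b \<in> {2..k}"
    then have "\<sigma> b \<noteq> \<sigma> 1" using permutes_inj[OF \<sigma>] by (auto simp: inj_eq)
    moreover have "\<sigma> b \<in> {1..k}" using b permutes_in_image[OF \<sigma>] by auto
    ultimately show "\<sigma> 1 < \<sigma> b" using \<open>\<sigma> 1 = 1\<close> by auto
  qed
next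
  assume least: "\<forall>b\<in>{2..k}. \<sigma> 1 < \<sigma> b"
  have "1 \<in> \<sigma> ` {1..k}" using permutes_image[OF \<sigma>] \<open>1 \<le> k\<close> by simp
  then obtain b where b: "b \<in> {1..k}" "\<sigma> b = 1" by auto
  have "\<sigma> 1 = 1"
  proof (cases "b = 1")
    case False
    with b have "b \<in> {2..k}" by auto
    with least have "\<sigma> 1 < \<sigma> b" by blast
    with b have "\<sigma> 1 < 1" by simp
    moreover have "\<sigma> 1 \<in> {1..k}" using permutes_in_image[OF \<sigma>] \<open>1 \<le> k\<close> by simp
    ultimately show ?thesis by simp
  qed (use b in simp)
  with \<sigma> show "\<sigma> \<in> Fpat k" by (simp add: Fpat_def)
qed

lemma contains_Fpat_at_position_of_1:
  assumes \<pi>: "\<pi> permutes {1..N}" and "\<pi> m = 1" and "1 \<le> m" "m + k - 1 \<le> N" "1 \<le> k"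
  shows "\<exists>\<sigma>\<in>Fpat k. contains_pattern N \<pi> k \<sigma>"
proof -
  define f where "f a = m + a - 1" for a
  have f_mono: "strict_mono_on {1..k} f" by (auto simp: monotone_on_def f_def)
  have f_range: "f ` {1..k} \<subseteq> {1..N}" using assms by (auto simp: f_def)
  have "inj_on (\<pi> \<circ> f) {1..k}"
    using strict_mono_on_imp_inj_on[OF f_mono] permutes_inj[OF \<pi>]
    by (simp add: comp_inj_on inj_on_subset)
  then obtain r where r: "r permutes {1..k}"
    and r_iff: "\<forall>a\<in>{1..k}. \<forall>b\<in>{1..k}. (\<pi> \<circ> f) a < (\<pi> \<circ> f) b \<longleftrightarrow> r a < r b"
    by (rule order_isomorphic_permutation)
  have "\<pi> (f 1) < \<pi> (f b)" if "b \<in> {2..k}" for b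
  proof -
    have fb: "f b \<in> {1..N}" "f b \<noteq> m" using that assms(3-5) by (auto simp: f_def)
    have "\<pi> (f b) \<in> {1..N}" using permutes_in_image[OF \<pi>] fb(1) by blast
    moreover have "\<pi> (f b) \<noteq> \<pi> m" using fb(2) permutes_inj[OF \<pi>] by (simp add: inj_eq)
    ultimately show ?thesis using \<open>\<pi> m = 1\<close> by (simp add: f_def)
  qed
  with r_iff \<open>1 \<le> k\<close> have "r \<in> Fpat k"
    by (subst Fpat_iff_first_least[OF r \<open>1 \<le> k\<close>]) auto
  moreover have "contains_pattern N \<pi> k r"
    unfolding contains_pattern_def using f_mono f_range r_iff by auto
  ultimately show ?thesis by blast
qed

lemma contains_pattern_ins_cycle:
  assumes "contains_pattern n \<sigma> k \<tau>" and "2 \<le> m"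
  shows "contains_pattern (n+2) (ins_cycle n m \<sigma>) k \<tau>"
proof -
  obtain f where f_mono: "strict_mono_on {1..k} f" and f_range: "f ` {1..k} \<subseteq> {1..n}"
    and f_iff: "\<forall>a\<in>{1..k}. \<forall>b\<in>{1..k}. \<sigma> (f a) < \<sigma> (f b) \<longleftrightarrow> \<tau> a < \<tau> b"
    using assms(1) unfolding contains_pattern_def by blast
  have f_in: "f a \<in> {1..n}" if "a \<in> {1..k}" for a using f_range that by blast
  have \<pi>_skip: "ins_cycle n m \<sigma> ((skip m \<circ> f) a) = skip m (\<sigma> (f a))" if "a \<in> {1..k}" for a
    using ins_cycle_skip[OF f_in[OF that] assms(2)] by simp
  have "strict_mono_on {1..k} (skip m \<circ> f)"
    using f_mono by (simp add: monotone_on_def)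
  moreover have "(skip m \<circ> f) ` {1..k} \<subseteq> {1..n+2}"
  proof
    fix j assume "j \<in> (skip m \<circ> f) ` {1..k}"
    then obtain a where "a \<in> {1..k}" "j = skip m (f a)" by auto
    with skip_in_range[OF f_in[OF \<open>a \<in> {1..k}\<close>] assms(2)] show "j \<in> {1..n+2}" by simp
  qed
  moreover have "\<forall>a\<in>{1..k}. \<forall>b\<in>{1..k}.
      ins_cycle n m \<sigma> ((skip m \<circ> f) a) < ins_cycle n m \<sigma> ((skip m \<circ> f) b) \<longleftrightarrow> \<tau> a < \<tau> b"
  proof (intro ballI)
    fix a b assume "a \<in> {1..k}" "b \<in> {1..k}"
    with f_iff \<pi>_skip[of a] \<pi>_skip[of b]
    show "ins_cycle n m \<sigma> ((skip m \<circ> f) a) < ins_cycle n m \<sigma> ((skip m \<circ> f) b) \<longleftrightarrow> \<tau> a < \<tau> b"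
      by simp
  qed
  ultimately show ?thesis unfolding contains_pattern_def by blast
qed

lemma Fpat_occurrence_avoids_first_cycle:
  assumes \<pi>: "is_involution N \<pi>" and "\<pi> 1 = m" and short: "N + 2 \<le> m + k" "2 \<le> k"
    and \<tau>: "\<tau> \<in> Fpat k"
    and f_mono: "strict_mono_on {1..k} f" and f_range: "f ` {1..k} \<subseteq> {1..N}"
    and f_iff: "\<forall>a\<in>{1..k}. \<forall>b\<in>{1..k}. \<pi> (f a) < \<pi> (f b) \<longleftrightarrow> \<tau> a < \<tau> b"
    and a: "a \<in> {1..k}"
  shows "f a \<in> {2..N} \<and> f a \<noteq> m"
proof -
  have "\<pi> m = 1" using \<open>\<pi> 1 = m\<close> involution_involutive[OF \<pi>] by metis
  have one: "1 \<in> {1..k}" using short by simp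
  have f_in: "f b \<in> {1..N}" if "b \<in> {1..k}" for b using f_range that by blast
  have \<pi>f_in: "\<pi> (f b) \<in> {1..N}" if "b \<in> {1..k}" for b
    by (rule involution_in_range[OF \<pi> f_in[OF that]])
  have \<tau>_least: "\<forall>b\<in>{2..k}. \<tau> 1 < \<tau> b"
    using \<tau> Fpat_iff_first_least[of \<tau> k] short by (simp add: Fpat_def)
  have above_first: "f 1 < f b" "\<pi> (f 1) < \<pi> (f b)" if "b \<in> {2..k}" for b
  proof -
    have b: "b \<in> {1..k}" "1 < b" using that by auto
    show "f 1 < f b" using f_mono one b unfolding monotone_on_def by blast
    show "\<pi> (f 1) < \<pi> (f b)" using f_iff one b(1) \<tau>_least that by blast
  qed
  have f_inj: "inj_on f {2..k}"
    using strict_mono_on_imp_inj_on[OF f_mono] by (rule inj_on_subset) auto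
  \<comment> \<open>the k - 1 later entries lie above the first one both in position and in value\<close>
  have no_room: False if "inj_on h {2..k}" "h ` {2..k} \<subseteq> {m<..N}" for h
  proof -
    have "card {2..k} \<le> card {m<..N}" using card_inj_on_le[OF that] by simp
    with short show False by simp
  qed
  have "f 1 \<noteq> 1"
  proof
    assume "f 1 = 1"
    have "inj_on (\<pi> \<circ> f) {2..k}"
      using f_inj involution_inj[OF \<pi>] by (simp add: comp_inj_on inj_on_subset)
    moreover have "(\<pi> \<circ> f) ` {2..k} \<subseteq> {m<..N}"
    proof
      fix j assume "j \<in> (\<pi> \<circ> f) ` {2..k}"
      then obtain b where b: "b \<in> {2..k}" "j = \<pi> (f b)" by auto
      then have "b \<in> {1..k}" by simp
      with above_first(2)[OF b(1)] \<pi>f_in[of b] \<open>f 1 = 1\<close> \<open>\<pi> 1 = m\<close> b(2)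
      show "j \<in> {m<..N}" by simp
    qed
    ultimately show False by (rule no_room)
  qed
  moreover have "f 1 \<noteq> m"
  proof
    assume "f 1 = m"
    have "f ` {2..k} \<subseteq> {m<..N}"
    proof
      fix j assume "j \<in> f ` {2..k}"
      then obtain b where b: "b \<in> {2..k}" "j = f b" by auto
      then have "b \<in> {1..k}" by simp
      with above_first(1)[OF b(1)] f_in[of b] \<open>f 1 = m\<close> b(2)
      show "j \<in> {m<..N}" by simp
    qed
    with f_inj show False by (rule no_room)
  qed
  moreover have "f b \<noteq> 1 \<and> f b \<noteq> m" if "b \<in> {2..k}" for b
  proof -
    have "1 \<le> \<pi> (f 1)" "1 \<le> f 1" using \<pi>f_in[OF one] f_in[OF one] by simp_all
    with above_first[OF that] have "f b \<noteq> 1" "\<pi> (f b) \<noteq> \<pi> m"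
      using \<open>\<pi> m = 1\<close> by auto
    then show ?thesis by auto
  qed
  ultimately have "f a \<noteq> 1 \<and> f a \<noteq> m"
    using a by (cases "a = 1") auto
  with f_in[OF a] show ?thesis by auto
qed

lemma contains_pattern_del_cycle:
  assumes \<sigma>: "is_involution n \<sigma>" and m: "2 \<le> m" "m \<le> n+2" and short: "n + 4 \<le> m + k" "2 \<le> k"
    and \<tau>: "\<tau> \<in> Fpat k" and "contains_pattern (n+2) (ins_cycle n m \<sigma>) k \<tau>"
  shows "contains_pattern n \<sigma> k \<tau>"
proof -
  let ?\<pi> = "ins_cycle n m \<sigma>"
  obtain f where f_mono: "strict_mono_on {1..k} f" and f_range: "f ` {1..k} \<subseteq> {1..n+2}"
    and f_iff: "\<forall>a\<in>{1..k}. \<forall>b\<in>{1..k}. ?\<pi> (f a) < ?\<pi> (f b) \<longleftrightarrow> \<tau> a < \<tau> b"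
    using assms(7) unfolding contains_pattern_def by blast
  have "?\<pi> 1 = m" by (simp add: ins_cycle_def)
  have f_mid: "f a \<in> {2..n+2} \<and> f a \<noteq> m" if "a \<in> {1..k}" for a
    by (rule Fpat_occurrence_avoids_first_cycle[OF ins_cycle_involution[OF \<sigma> m] \<open>?\<pi> 1 = m\<close>
        _ short(2) \<tau> f_mono f_range f_iff that]) (use short in simp)
  define g where "g = unskip m \<circ> f"
  have g_in: "g a \<in> {1..n}" if "a \<in> {1..k}" for a
    unfolding g_def o_def using f_mid[OF that] by (intro unskip_in_range m) auto
  have \<pi>f: "?\<pi> (f a) = skip m (\<sigma> (g a))" if "a \<in> {1..k}" for a
  proof -
    have "f a = skip m (g a)" using f_mid[OF that] by (simp add: g_def skip_unskip)
    then show ?thesis using ins_cycle_skip[OF g_in[OF that] m(1)] by simp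
  qed
  have "strict_mono_on {1..k} g"
    unfolding monotone_on_def
  proof (intro ballI impI)
    fix a b assume "a \<in> {1..k}" "b \<in> {1..k}" "a < b"
    moreover from this have "f a < f b" using f_mono by (simp add: monotone_on_def)
    ultimately show "g a < g b"
      using f_mid[of a] f_mid[of b] by (simp add: g_def unskip_less_iff)
  qed
  moreover have "g ` {1..k} \<subseteq> {1..n}" using g_in by blast
  moreover have "\<forall>a\<in>{1..k}. \<forall>b\<in>{1..k}. \<sigma> (g a) < \<sigma> (g b) \<longleftrightarrow> \<tau> a < \<tau> b"
  proof (intro ballI)
    fix a b assume "a \<in> {1..k}" "b \<in> {1..k}"
    with f_iff have "?\<pi> (f a) < ?\<pi> (f b) \<longleftrightarrow> \<tau> a < \<tau> b" by blast
    with \<open>a \<in> {1..k}\<close> \<open>b \<in> {1..k}\<close> show "\<sigma> (g a) < \<sigma> (g b) \<longleftrightarrow> \<tau> a < \<tau> b"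
      by (simp add: \<pi>f)
  qed
  ultimately show ?thesis unfolding contains_pattern_def by blast
qed

lemma inv_avoid_eq: "inv_avoid n k T = {\<pi>\<in>involutions n. \<forall>\<sigma>\<in>T. \<not> contains_pattern n \<pi> k \<sigma>}"
  by (simp add: inv_avoid_def involutions_def)

lemma inv_avoid_short: "n < k \<Longrightarrow> inv_avoid n k T = involutions n"
  by (simp add: inv_avoid_eq not_contains_longer_pattern)

lemma Fpat_avoider_first_value:
  assumes "\<pi> \<in> inv_avoid N k (Fpat k)" and "1 \<le> k" "1 \<le> N"
  shows "N + 2 \<le> \<pi> 1 + k"
proof (rule ccontr)
  assume "\<not> N + 2 \<le> \<pi> 1 + k"
  have \<pi>: "is_involution N \<pi>" using assms(1) by (simp add: inv_avoid_def)
  have "\<pi> 1 \<in> {1..N}" using involution_in_range[OF \<pi>] assms(3) by simp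
  moreover have "\<pi> (\<pi> 1) = 1" by (rule involution_involutive[OF \<pi>])
  moreover have "\<pi> permutes {1..N}" using \<pi> by (simp add: is_involution_def)
  ultimately have "\<exists>\<sigma>\<in>Fpat k. contains_pattern N \<pi> k \<sigma>"
    using \<open>\<not> N + 2 \<le> \<pi> 1 + k\<close> assms(2) by (intro contains_Fpat_at_position_of_1) auto
  with assms(1) show False by (simp add: inv_avoid_def)
qed

lemma bij_betw_ins_cycle_avoiders:
  assumes k: "2 \<le> k" and m: "2 \<le> m" "m \<le> n+2" and "n + 4 \<le> m + k"
  shows "bij_betw (ins_cycle n m) (inv_avoid n k (Fpat k)) {\<pi>\<in>inv_avoid (n+2) k (Fpat k). \<pi> 1 = m}"
proof -
  have "bij_betw (ins_cycle n m)
          {\<sigma>\<in>involutions n. \<forall>\<tau>\<in>Fpat k. \<not> contains_pattern n \<sigma> k \<tau>}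
          {\<pi>\<in>{\<pi>\<in>involutions (n+2). \<pi> 1 = m}. \<forall>\<tau>\<in>Fpat k. \<not> contains_pattern (n+2) \<pi> k \<tau>}"
  proof (rule bij_betw_Collect[OF bij_betw_ins_cycle[OF m]])
    fix \<sigma> assume "\<sigma> \<in> involutions n"
    then have \<sigma>: "is_involution n \<sigma>" by (simp add: involutions_def)
    show "(\<forall>\<tau>\<in>Fpat k. \<not> contains_pattern (n+2) (ins_cycle n m \<sigma>) k \<tau>) \<longleftrightarrow>
          (\<forall>\<tau>\<in>Fpat k. \<not> contains_pattern n \<sigma> k \<tau>)"
      using contains_pattern_ins_cycle[OF _ m(1)] contains_pattern_del_cycle[OF \<sigma> m assms(4) k]
      by blast
  qed
  moreover have "{\<pi>\<in>{\<pi>\<in>involutions (n+2). \<pi> 1 = m}. \<forall>\<tau>\<in>Fpat k. \<not> contains_pattern (n+2) \<pi> k \<tau>}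
      = {\<pi>\<in>inv_avoid (n+2) k (Fpat k). \<pi> 1 = m}"
    by (auto simp: inv_avoid_eq)
  ultimately show ?thesis by (simp add: inv_avoid_eq)
qed

lemma fix_enum_avoiders_rec:
  assumes k: "2 \<le> k" "k \<le> n+2"
  shows "fix_enum (n+2) p (inv_avoid (n+2) k (Fpat k)) = real (k-1) * fix_enum n p (inv_avoid n k (Fpat k))"
proof -
  let ?A = "\<lambda>N. inv_avoid N k (Fpat k)"
  let ?E = "\<lambda>m. fix_enum (n+2) p {\<pi>\<in>?A (n+2). \<pi> 1 = m}"
  have small_first: "?E m = 0" if "m \<in> {1..n+2} - {n+4-k..n+2}" for m
  proof -
    have empty: "{\<pi>\<in>?A (n+2). \<pi> 1 = m} = {}"
      using that k Fpat_avoider_first_value[of _ "n+2" k] by fastforce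
    show ?thesis unfolding fix_enum_def empty by simp
  qed
  have large_first: "?E m = p ^ 0 * fix_enum n p (?A n)" if "m \<in> {n+4-k..n+2}" for m
    by (rule fix_enum_bij_betw[OF bij_betw_ins_cycle_avoiders])
      (use that k fixpts_ins_cycle[of m n] in auto)
  have "fix_enum (n+2) p (?A (n+2)) = (\<Sum>m\<in>{1..n+2}. ?E m)"
    by (rule fix_enum_group_by_first) (auto simp: inv_avoid_eq)
  also have "\<dots> = (\<Sum>m\<in>{n+4-k..n+2}. ?E m)"
    by (rule sum.mono_neutral_right) (use k small_first in auto)
  also have "\<dots> = (\<Sum>m\<in>{n+4-k..n+2}. fix_enum n p (?A n))"
    using large_first by (intro sum.cong) auto
  also have "\<dots> = real (k-1) * fix_enum n p (?A n)"
    using k by simp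
  finally show ?thesis .
qed

lemma fix_enum_avoiders_short: "n < k \<Longrightarrow> fix_enum n p (inv_avoid n k T) = J n p"
  by (simp add: inv_avoid_short fix_enum_involutions)

lemma fix_enum_1: "fix_enum n 1 A = real (card A)"
  by (simp add: fix_enum_def)

lemma two_step_rec_power:
  fixes a :: "nat \<Rightarrow> 'a::monoid_mult"
  assumes rec: "\<And>n. r \<le> n \<Longrightarrow> a (n + 2) = c * a n" and "r \<le> m"
  shows "a (m + 2 * i) = c ^ i * a m"
proof (induction i)
  case (Suc i)
  have "a (m + 2 * Suc i) = a ((m + 2 * i) + 2)" by simp
  also have "\<dots> = c * a (m + 2 * i)" using rec \<open>r \<le> m\<close> by simp
  finally show ?case using Suc by (simp add: mult.assoc)
qed simp

lemma fps_nth_sum_monomials: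
  fixes a :: "nat \<Rightarrow> 'a::comm_ring_1"
  shows "fps_nth (\<Sum>j=0..K. fps_const (a j) * fps_X ^ j) n = (if n \<le> K then a n else 0)"
proof -
  have "fps_nth (\<Sum>j=0..K. fps_const (a j) * fps_X ^ j) n = (\<Sum>j\<in>{0..K}. a j * (if n = j then 1 else 0))"
    by (simp only: fps_sum_nth fps_mult_left_const_nth fps_X_power_nth)
  also have "\<dots> = (\<Sum>j\<in>{0..K}. if j = n then a j else 0)"
    by (rule sum.cong) auto
  also have "\<dots> = (if n \<le> K then a n else 0)" by (subst sum.delta) auto
  finally show ?thesis .
qed

lemma fps_two_step_rec:
  fixes a :: "nat \<Rightarrow> 'a::field"
  assumes rec: "\<And>n. r \<le> n \<Longrightarrow> a (n + 2) = c * a n"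
  shows "Abs_fps a =
           (\<Sum>j=0..r. fps_const (a j) * fps_X ^ j)
           + fps_X ^ (r+1) / (1 - fps_const c * fps_X ^ 2)
             * (fps_const (c * a r) * fps_X + fps_const (a (r+1)))"
proof -
  define P where "P = (\<Sum>j=0..r. fps_const (a j) * fps_X ^ j)"
  define D :: "'a fps" where "D = 1 - fps_const c * fps_X ^ 2"
  define Q where "Q = fps_const (c * a r) * fps_X + fps_const (a (r+1))"
  define T where "T = Abs_fps a - P"
  define b where "b n = (if n \<le> r then 0 else a n)" for n
  have tail: "fps_nth T n = b n" for n
    by (simp add: T_def P_def b_def fps_nth_sum_monomials)
  have "fps_nth (T * D) n = fps_nth (fps_X ^ (r+1) * Q) n" for n
  proof -
    have "T * D = T - fps_const c * (fps_X ^ 2 * T)"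
      by (simp add: D_def algebra_simps)
    then have lhs: "fps_nth (T * D) n = b n - c * (if n < 2 then 0 else b (n - 2))"
      by (simp only: fps_sub_nth fps_mult_left_const_nth fps_X_power_mult_nth tail)
    have rhs: "fps_nth (fps_X ^ (r+1) * Q) n = (if n < r + 1 then 0 else fps_nth Q (n - (r+1)))"
      by (rule fps_X_power_mult_nth)
    have Q_nth: "fps_nth Q j = (if j = 0 then a (r+1) else if j = 1 then c * a r else 0)" for j
      by (simp add: Q_def fps_X_nth)
    consider "n \<le> r" | "n = r + 1" | "n = r + 2" | "r + 2 < n" by linarith
    then show ?thesis
    proof cases
      case 1
      moreover have "n - 2 \<le> r" using 1 by linarith
      ultimately show ?thesis unfolding lhs rhs by (simp add: b_def)
    next
      case 2
      then show ?thesis unfolding lhs rhs Q_nth by (simp add: b_def)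
    next
      case 3
      then show ?thesis unfolding lhs rhs Q_nth using rec[of r] by (simp add: b_def)
    next
      case 4
      define j where "j = n - 2"
      have "n = j + 2" "r < j" using 4 by (simp_all add: j_def)
      then show ?thesis unfolding lhs rhs Q_nth using rec[of j] by (simp add: b_def)
    qed
  qed
  then have key: "T * D = fps_X ^ (r+1) * Q" by (rule fps_ext)
  have D0: "fps_nth D 0 \<noteq> 0" by (simp add: D_def)
  have "Abs_fps a = P + T * (D * inverse D)"
    using inverse_mult_eq_1'[OF D0] by (simp add: T_def)
  also have "\<dots> = P + fps_X ^ (r+1) * Q * inverse D"
    by (simp only: mult.assoc[symmetric] key)
  also have "\<dots> = P + fps_X ^ (r+1) / D * Q"
    by (simp only: fps_divide_unit[OF D0] ac_simps)
  finally show ?thesis unfolding P_def D_def Q_def .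
qed

lemma Fgf_closed_form:
  assumes "k \<ge> 2"
  shows "Fgf k p =
           (\<Sum>j=0..k-2. fps_const (J j p) * fps_X ^ j)
           + fps_X ^ (k-1) / (1 - fps_const (real (k-1)) * fps_X ^ 2)
             * (fps_const (real (k-1) * J (k-2) p) * fps_X + fps_const (J (k-1) p))"
proof -
  define r where "r = k - 2"
  have k: "k = r + 2" using assms by (simp add: r_def)
  let ?S = "\<lambda>N. fix_enum N p (inv_avoid N k (Fpat k))"
  have short: "?S j = J j p" if "j \<le> r + 1" for j
    using fix_enum_avoiders_short that k by simp
  have sum_eq: "(\<Sum>j=0..r. fps_const (?S j) * fps_X ^ j) = (\<Sum>j=0..r. fps_const (J j p) * fps_X ^ j)"
    by (rule sum.cong) (simp_all add: short)
  have "Fgf k p = Abs_fps ?S" by (simp add: Fgf_def fix_enum_def)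
  also have "\<dots> = (\<Sum>j=0..r. fps_const (?S j) * fps_X ^ j)
      + fps_X ^ (r+1) / (1 - fps_const (real (k-1)) * fps_X ^ 2)
        * (fps_const (real (k-1) * ?S r) * fps_X + fps_const (?S (r+1)))"
    by (rule fps_two_step_rec) (use fix_enum_avoiders_rec[OF assms] k in simp)
  finally show ?thesis using sum_eq short[of r] short[of "r+1"] k by simp
qed

lemma card_inv_avoid_shift:
  assumes "k \<ge> 2" and "k \<le> m + 2"
  shows "card (inv_avoid (m + 2 * i) k (Fpat k)) = (k-1) ^ i * card (inv_avoid m k (Fpat k))"
proof -
  let ?S = "\<lambda>N. fix_enum N 1 (inv_avoid N k (Fpat k))"
  have "?S (m + 2 * i) = real (k-1) ^ i * ?S m"
    by (rule two_step_rec_power[of "k - 2"]) (use fix_enum_avoiders_rec[OF assms(1)] assms in simp_all)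
  then have "real (card (inv_avoid (m + 2 * i) k (Fpat k))) =
      real ((k-1) ^ i * card (inv_avoid m k (Fpat k)))"
    by (simp add: fix_enum_1)
  then show ?thesis by (simp only: of_nat_eq_iff)
qed

theorem theorem3p1:
  fixes k :: nat and p :: real
  assumes "k \<ge> 2"
  shows "(Fgf k p =
           (\<Sum>j=0..k-2. fps_const (J j p) * fps_X ^ j)
           + fps_X ^ (k-1) / (1 - fps_const (real (k-1)) * fps_X ^ 2)
             * (fps_const (real (k-1) * J (k-2) p) * fps_X + fps_const (J (k-1) p))) \<and>
         (\<forall>n::nat. card (inv_avoid (k+2*n) k (Fpat k)) = (k-1)^(n+1) * card (involutions (k-2))) \<and>
         (\<forall>n::nat. card (inv_avoid (k+2*n-1) k (Fpat k)) = (k-1)^n * card (involutions (k-1)))"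
proof -
  have "card (inv_avoid (k+2*n) k (Fpat k)) = (k-1)^(n+1) * card (involutions (k-2))" for n
  proof -
    have "k + 2 * n = (k - 2) + 2 * (n + 1)" using assms by simp
    then show ?thesis
      using card_inv_avoid_shift[OF assms, of "k-2" "n+1"] inv_avoid_short[of "k-2" k] assms by simp
  qed
  moreover have "card (inv_avoid (k+2*n-1) k (Fpat k)) = (k-1)^n * card (involutions (k-1))" for n
  proof -
    have "k + 2 * n - 1 = (k - 1) + 2 * n" using assms by simp
    then show ?thesis
      using card_inv_avoid_shift[OF assms, of "k-1" n] inv_avoid_short[of "k-1" k] assms by simp
  qed
  ultimately show ?thesis using Fgf_closed_form[OF assms] by blast
qed

end
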